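(* Let $i_0\ge1$ be an integer and $f:[p_{i_0},+\infty)\to\mathbb R$ an increasing function such that $p_{i+1}\le p_i+f(p_{i+1})$ for all $i\ge i_0$. Let $k\ge1$ and $x\ge p_{i_0+k-1}$. If $t\mapsto f(t)/t$ is decreasing for $t\ge x$, then \[ \eta_k(x)\ge 1-k\frac{f(x)}{x}. \]
   Context: $p_i$ denotes the $i$-th prime. For $x\ge p_k$, $\eta_k(x)=\min\{p_{i-k}/p_i:\ p_i>x\}$. *)

theory Defs
  imports Complex_Main "HOL-Computational_Algebra.Primes" "HOL-Library.Infinite_Set"
begin

text \<open>p i is the i-th prime, 1-indexed: p 1 = 2, p 2 = 3, ...\<close>
definition p :: "nat \<Rightarrow> nat" where
  "p i = enumerate {q::nat. prime q} (i - 1)"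

definition eta :: "nat \<Rightarrow> real \<Rightarrow> real" where
  "eta k x = Inf {real (p (i - k)) / real (p i) | i. i \<ge> 1 \<and> real (p i) > x}"

end

theory Submission
  imports Defs
begin

text \<open>
  Telescoping the gap condition over \<open>k\<close> consecutive primes and using the monotonicity of \<open>f\<close>
  gives \<open>p\<^sub>i - p\<^sub>i\<^sub>-\<^sub>k \<le> k f(p\<^sub>i)\<close> for every prime \<open>p\<^sub>i > x\<close>. Dividing by \<open>p\<^sub>i\<close> and using that
  \<open>f(t)/t\<close> decreases beyond \<open>x\<close> yields \<open>1 - p\<^sub>i\<^sub>-\<^sub>k/p\<^sub>i \<le> k f(x)/x\<close>, a uniform lower bound for
  all ratios whose infimum is \<open>\<eta>\<^sub>k(x)\<close>.
\<close>

lemma prime_p: "prime (p i)"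
  unfolding p_def using enumerate_in_set[OF primes_infinite] by blast

lemma p_pos: "real (p i) > 0"
  using prime_p prime_gt_0_nat by simp

lemma p_mono: "i \<le> j \<Longrightarrow> p i \<le> p j"
  unfolding p_def using primes_infinite by (simp add: diff_le_mono)

lemma p_less_p_imp_less: "p i < p j \<Longrightarrow> i < j"
  using p_mono by (meson leD leI)

lemma ex_p_greater: "\<exists>i\<ge>1. real (p i) > x"
proof -
  obtain q :: nat where q: "prime q" "q > nat \<lceil>x\<rceil>"
    using bigger_prime by blast
  then obtain n where "enumerate {q::nat. prime q} n = q"
    using enumerate_Ex[OF primes_infinite] by blast
  then have "p (n + 1) = q"
    unfolding p_def by simp
  with q show ?thesis
    by (intro exI[of _ "n + 1"]) linarith
qed

lemma eta_greatest:
  assumes "\<And>i. i \<ge> 1 \<Longrightarrow> real (p i) > x \<Longrightarrow> c \<le> real (p (i - k)) / real (p i)"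
  shows "c \<le> eta k x"
  unfolding eta_def
proof (rule cInf_greatest)
  obtain i where "i \<ge> 1" "real (p i) > x"
    using ex_p_greater by blast
  then show "{real (p (i - k)) / real (p i) |i. i \<ge> 1 \<and> real (p i) > x} \<noteq> {}"
    by blast
qed (use assms in blast)

lemma gap_telescope:
  fixes a :: "nat \<Rightarrow> real"
  assumes "mono a"
    and f_mono: "mono_on {a i0..} f"
    and gap: "\<And>i. i \<ge> i0 \<Longrightarrow> a (i + 1) \<le> a i + f (a (i + 1))"
    and "j \<ge> i0"
  shows "a (j + n) - a j \<le> real n * f (a (j + n))"
proof (induction n)
  case 0
  then show ?case by simp
next
  case (Suc n)
  have "a i0 \<le> a (j + n)" "a (j + n) \<le> a (j + n + 1)"
    using monoD[OF \<open>mono a\<close>] \<open>j \<ge> i0\<close> by simp_all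
  then have "f (a (j + n)) \<le> f (a (j + n + 1))"
    by (intro mono_onD[OF f_mono]) auto
  then have "real n * f (a (j + n)) \<le> real n * f (a (j + n + 1))"
    by (simp add: mult_left_mono)
  moreover have "a (j + n + 1) \<le> a (j + n) + f (a (j + n + 1))"
    using gap[of "j + n"] \<open>j \<ge> i0\<close> by simp
  ultimately show ?case
    using Suc.IH by (simp add: algebra_simps)
qed

lemma one_minus_ratio_le:
  fixes a b c x :: real
  assumes "a > 0"
    and "a - b \<le> c * f a"
    and "f a / a \<le> f x / x"
    and "c \<ge> 0"
  shows "1 - b / a \<le> c * f x / x"
proof -
  have "1 - b / a = (a - b) / a"
    using \<open>a > 0\<close> by (simp add: field_simps)
  also have "\<dots> \<le> c * (f a / a)"
    using assms(1,2) by (simp add: divide_right_mono)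
  also have "\<dots> \<le> c * (f x / x)"
    using assms(3,4) by (intro mult_left_mono)
  finally show ?thesis
    by simp
qed

theorem mainTheorem12:
  fixes i0 k :: nat and f :: "real \<Rightarrow> real" and x :: real
  assumes "i0 \<ge> 1"
    and "mono_on {real (p i0)..} f"
    and "\<And>i. i \<ge> i0 \<Longrightarrow> real (p (i + 1)) \<le> real (p i) + f (real (p (i + 1)))"
    and "k \<ge> 1"
    and "x \<ge> real (p (i0 + k - 1))"
    and "antimono_on {x..} (\<lambda>t. f t / t)"
  shows "eta k x \<ge> 1 - real k * f x / x"
proof (rule eta_greatest)
  fix i assume "i \<ge> 1" and p_i: "real (p i) > x"
  then have "i0 + k - 1 < i"
    using assms(5) p_less_p_imp_less by fastforce
  then have "i - k \<ge> i0" and "i - k + k = i"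
    using \<open>k \<ge> 1\<close> by auto
  moreover have "mono (\<lambda>i. real (p i))"
    by (simp add: monoI p_mono)
  ultimately have "p i - real (p (i - k)) \<le> real k * f (p i)"
    using gap_telescope[of "\<lambda>i. real (p i)", OF _ assms(2,3)] by metis
  moreover have "f (p i) / p i \<le> f x / x"
    using assms(6) p_i unfolding monotone_on_def by simp
  ultimately have "1 - real (p (i - k)) / real (p i) \<le> real k * f x / x"
    by (intro one_minus_ratio_le[OF p_pos]) simp_all
  then show "1 - real k * f x / x \<le> real (p (i - k)) / real (p i)"
    by simp
qed

end
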